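(* Let $d\ge1$ and let $P\subseteq[2]^d$ be a permutation array of rank $2$ and dimension $d$. Then every set $S$ of $4$ elements of $P$ contains a subset $S'$ (with at least two elements) such that for every $1\le i\le d$ the value $\min\{x_i:\mathbf x\in S'\}$ is attained by at least two elements of $S'$.
   Context: $[r]=\{0,\dots,r\}$; $[r]^d$ is ordered coordinatewise ($\mathbf x\preceq\mathbf y$ iff $x_i\le y_i$ for all $i$) with meet the coordinatewise minimum. For $P\subseteq[r]^d$: $P$ is rankable of rank $t$ if each coordinate takes exactly $t+1$ distinct values on elements of $P$. $P$ is totally rankable if every principal subarray $\{\mathbf y\in P:\mathbf y\succeq\mathbf x\}$, $\mathbf x\in[r]^d$, is rankable. A point $\mathbf x$ is redundant for $P$ if $\mathbf x$ is the coordinatewise minimum of some $\mathcal H\subseteq P$ with $|\mathcal H|\ge2$ whose every member shares at least one coordinate with $\mathbf x$. A permutation array of rank $r$ and dimension $d$ is a totally rankable $P\subseteq[r]^d$ of rank $r$ containing no redundant points. *)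

theory Defs
  imports Main
begin

text \<open>Points of [r]^d are lists of naturals of length d with entries at most r;
  coordinate i (paper: i+1) is x ! i for i < d.\<close>

definition grid :: "nat \<Rightarrow> nat \<Rightarrow> nat list set" where
  "grid r d = {x. length x = d \<and> (\<forall>i<d. x ! i \<le> r)}"

definition preceq :: "nat \<Rightarrow> nat list \<Rightarrow> nat list \<Rightarrow> bool" where
  "preceq d x y \<longleftrightarrow> (\<forall>i<d. x ! i \<le> y ! i)"

definition coord_vals :: "nat \<Rightarrow> nat list set \<Rightarrow> nat set" where
  "coord_vals i P = (\<lambda>x. x ! i) ` P"

definition rankable_of_rank :: "nat \<Rightarrow> nat list set \<Rightarrow> nat \<Rightarrow> bool" where
  "rankable_of_rank d P t \<longleftrightarrow> (\<forall>i<d. card (coord_vals i P) = t + 1)"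

text \<open>Rankable: every coordinate takes the same number of distinct values
  (this number is t+1 for rank t; the empty array, with 0 values, counts as rankable).\<close>
definition rankable :: "nat \<Rightarrow> nat list set \<Rightarrow> bool" where
  "rankable d P \<longleftrightarrow> (\<exists>k. \<forall>i<d. card (coord_vals i P) = k)"

definition totally_rankable :: "nat \<Rightarrow> nat \<Rightarrow> nat list set \<Rightarrow> bool" where
  "totally_rankable r d P \<longleftrightarrow>
     (\<forall>x\<in>grid r d. rankable d {y\<in>P. preceq d x y})"

definition meet :: "nat \<Rightarrow> nat list set \<Rightarrow> nat list" where
  "meet d H = map (\<lambda>i. Min (coord_vals i H)) [0..<d]"

definition redundant :: "nat \<Rightarrow> nat list set \<Rightarrow> nat list \<Rightarrow> bool" where
  "redundant d P x \<longleftrightarrow>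
     (\<exists>H. H \<subseteq> P \<and> finite H \<and> card H \<ge> 2 \<and> x = meet d H \<and>
          (\<forall>h\<in>H. \<exists>i<d. h ! i = x ! i))"

definition permutation_array :: "nat \<Rightarrow> nat \<Rightarrow> nat list set \<Rightarrow> bool" where
  "permutation_array r d P \<longleftrightarrow>
     P \<subseteq> grid r d \<and> totally_rankable r d P \<and> rankable_of_rank d P r \<and>
     (\<forall>x\<in>P. \<not> redundant d P x)"

end

theory Submission
  imports Defs
begin

text \<open>A principal subarray on which some coordinate is
  constant has rank 0, so it is a single point. Hence at most one point of P has a 2 in a given
  coordinate k. Moreover, above the point with a single 1 in coordinate i, coordinate i takes at
  most two values, hence so does every coordinate k; if one point there has k-coordinate 0, all
  those with positive k-coordinate share it, so there is at most one of them.
  Now if coordinate i of S has a unique minimiser, the other three points have positive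
  i-coordinate, and a unique minimiser among them in any coordinate k would leave two distinct
  points that both have a 2 in k, or both lie above a 0 in k.\<close>

definition unit_point :: "nat \<Rightarrow> nat set \<Rightarrow> nat \<Rightarrow> nat list" where
  "unit_point d A v = map (\<lambda>j. if j \<in> A then v else 0) [0..<d]"

lemma unit_point_in_grid: "v \<le> r \<Longrightarrow> unit_point d A v \<in> grid r d"
  by (auto simp: unit_point_def grid_def)

lemma preceq_unit_point_iff: "preceq d (unit_point d A v) y \<longleftrightarrow> (\<forall>j<d. j \<in> A \<longrightarrow> v \<le> y ! j)"
  by (auto simp: unit_point_def preceq_def)

lemma finite_grid: "finite (grid r d)"
proof -
  have "grid r d \<subseteq> {xs. set xs \<subseteq> {0..r} \<and> length xs = d}"
    by (auto simp: grid_def in_set_conv_nth)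
  moreover have "finite {xs. set xs \<subseteq> {0..r} \<and> length xs = d}"
    by (rule finite_lists_length_eq) simp
  ultimately show ?thesis by (rule finite_subset)
qed

lemma rankable_constant_coord_subsingleton:
  assumes "rankable d U" and "\<forall>y\<in>U. length y = d" and "b < d" and "\<forall>y\<in>U. y ! b = c"
    and "q \<in> U" and "s \<in> U"
  shows "q = s"
proof -
  obtain k where k: "\<forall>i<d. card (coord_vals i U) = k"
    using assms(1) unfolding rankable_def by blast
  have "coord_vals b U = {c}"
    using assms(4,5) unfolding coord_vals_def by force
  then have k1: "k = 1" using k assms(3) by force
  have "q ! i = s ! i" if i: "i < d" for i
  proof -
    obtain z where "coord_vals i U = {z}"
      using k k1 i by (auto simp: card_Suc_eq)
    moreover have "q ! i \<in> coord_vals i U" "s ! i \<in> coord_vals i U"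
      using assms(5,6) by (auto simp: coord_vals_def)
    ultimately show ?thesis by simp
  qed
  then show ?thesis
    using assms(2,5,6) by (metis nth_equalityI)
qed

lemma totally_rankable_constant_coord_unique:
  assumes "totally_rankable r d P" and "P \<subseteq> grid r d" and "x \<in> grid r d" and "b < d"
    and "\<forall>y\<in>P. preceq d x y \<longrightarrow> y ! b = c"
    and "q \<in> P" "preceq d x q" and "s \<in> P" "preceq d x s"
  shows "q = s"
proof (rule rankable_constant_coord_subsingleton)
  show "rankable d {y\<in>P. preceq d x y}"
    using assms(1,3) unfolding totally_rankable_def by blast
  show "\<forall>y\<in>{y\<in>P. preceq d x y}. length y = d"
    using assms(2) by (auto simp: grid_def)
qed (use assms in auto)

lemma totally_rankable_unique_top:
  assumes "totally_rankable r d P" and "P \<subseteq> grid r d" and "i < d"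
    and "p \<in> P" "r \<le> p ! i" and "q \<in> P" "r \<le> q ! i"
  shows "p = q"
proof (rule totally_rankable_constant_coord_unique[OF assms(1,2) unit_point_in_grid assms(3)])
  show "\<forall>y\<in>P. preceq d (unit_point d {i} r) y \<longrightarrow> y ! i = r"
    using assms(2,3) by (force simp: preceq_unit_point_iff grid_def)
qed (use assms in \<open>auto simp: preceq_unit_point_iff\<close>)

lemma totally_rankable_2_unique_above_zero:
  assumes tr: "totally_rankable 2 d P" and PG: "P \<subseteq> grid 2 d" and "a < d" "b < d"
    and p: "p \<in> P" "1 \<le> p ! a" "p ! b = 0"
    and q: "q \<in> P" "1 \<le> q ! a" "1 \<le> q ! b"
    and s: "s \<in> P" "1 \<le> s ! a" "1 \<le> s ! b"
  shows "q = s"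
proof -
  define U where "U = {y\<in>P. preceq d (unit_point d {a} 1) y}"
  have "rankable d U"
    using tr unit_point_in_grid[of 1 2 d "{a}"] unfolding totally_rankable_def U_def by auto
  then obtain k where k: "\<forall>i<d. card (coord_vals i U) = k" unfolding rankable_def by blast
  have "coord_vals a U \<subseteq> {1, 2}"
  proof
    fix z assume "z \<in> coord_vals a U"
    then obtain y where "y \<in> P" "1 \<le> y ! a" "z = y ! a"
      using \<open>a < d\<close> by (auto simp: coord_vals_def U_def preceq_unit_point_iff)
    moreover have "y ! a \<le> 2" using PG \<open>y \<in> P\<close> \<open>a < d\<close> by (auto simp: grid_def)
    ultimately show "z \<in> {1, 2}" by auto
  qed
  then have "card (coord_vals a U) \<le> 2"
    using card_mono[of "{1, 2::nat}"] by (simp add: numeral_2_eq_2)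
  then have card_b: "card (coord_vals b U) \<le> 2" using k \<open>a < d\<close> \<open>b < d\<close> by simp
  have finite_b: "finite (coord_vals b U)"
    using finite_subset[OF PG finite_grid] by (auto simp: U_def coord_vals_def)
  have pU: "p \<in> U" and qU: "q \<in> U"
    using p q \<open>a < d\<close> by (auto simp: U_def preceq_unit_point_iff)
  show ?thesis
  proof (rule totally_rankable_constant_coord_unique
        [OF tr PG unit_point_in_grid[of 1 2 d "{a, b}"] \<open>b < d\<close>])
    show "\<forall>y\<in>P. preceq d (unit_point d {a, b} 1) y \<longrightarrow> y ! b = q ! b"
    proof (intro ballI impI)
      fix y assume "y \<in> P" "preceq d (unit_point d {a, b} 1) y"
      then have yU: "y \<in> U" and yb: "1 \<le> y ! b"
        using \<open>a < d\<close> \<open>b < d\<close> by (auto simp: U_def preceq_unit_point_iff)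
      show "y ! b = q ! b"
      proof (rule ccontr)
        assume ne: "y ! b \<noteq> q ! b"
        have "{0, q ! b, y ! b} \<subseteq> coord_vals b U"
          using pU qU yU p by (auto simp: coord_vals_def image_iff)
        moreover have "card {0, q ! b, y ! b} = 3" using ne q yb by auto
        ultimately have "3 \<le> card (coord_vals b U)"
          using card_mono[OF finite_b] by metis
        with card_b show False by simp
      qed
    qed
  qed (use q s in \<open>auto simp: preceq_unit_point_iff\<close>)
qed

definition min_attained_twice :: "nat \<Rightarrow> nat list set \<Rightarrow> bool" where
  "min_attained_twice i S \<longleftrightarrow>
     (\<exists>a\<in>S. \<exists>b\<in>S. a \<noteq> b \<and> a ! i = Min (coord_vals i S) \<and> b ! i = Min (coord_vals i S))"

lemma unique_minimiser_if_not_min_attained_twice: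
  assumes "finite S" "S \<noteq> {}" "\<not> min_attained_twice i S"
  obtains t0 where "t0 \<in> S" "\<And>t. t \<in> S \<Longrightarrow> t \<noteq> t0 \<Longrightarrow> t0 ! i < t ! i"
proof -
  have fin: "finite (coord_vals i S)" and ne: "coord_vals i S \<noteq> {}"
    using assms(1,2) by (auto simp: coord_vals_def)
  obtain t0 where t0: "t0 \<in> S" "t0 ! i = Min (coord_vals i S)"
    using Min_in[OF fin ne] by (auto simp: coord_vals_def)
  have "t0 ! i < t ! i" if "t \<in> S" "t \<noteq> t0" for t
  proof -
    have "t0 ! i \<le> t ! i" using t0 Min_le[OF fin] that(1) by (auto simp: coord_vals_def)
    moreover have "t ! i \<noteq> t0 ! i"
      using assms(3) t0 that unfolding min_attained_twice_def by metis
    ultimately show ?thesis by simp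
  qed
  with t0 that show ?thesis by blast
qed

lemma three_above_threshold_min_attained_twice:
  assumes tr: "totally_rankable 2 d P" and PG: "P \<subseteq> grid 2 d"
    and "T \<subseteq> P" "card T = 3" "i < d" "\<forall>t\<in>T. 1 \<le> t ! i" "k < d"
  shows "min_attained_twice k T"
proof (rule ccontr)
  assume not_twice: "\<not> min_attained_twice k T"
  have finT: "finite T" and "T \<noteq> {}" using \<open>card T = 3\<close> card.infinite by fastforce+
  then obtain t0 where t0: "t0 \<in> T" and gt: "\<And>t. t \<in> T \<Longrightarrow> t \<noteq> t0 \<Longrightarrow> t0 ! k < t ! k"
    using unique_minimiser_if_not_min_attained_twice[OF _ _ not_twice] by blast
  have "card (T - {t0}) = 2" using \<open>card T = 3\<close> t0 finT by simp
  then obtain t1 t2 where t12: "T - {t0} = {t1, t2}" "t1 \<noteq> t2" by (auto simp: card_2_iff)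
  then have t1: "t1 \<in> T" "t0 ! k < t1 ! k" and t2: "t2 \<in> T" "t0 ! k < t2 ! k"
    using gt by blast+
  have "t1 = t2"
  proof (cases "t0 ! k = 0")
    case True
    show ?thesis
      by (rule totally_rankable_2_unique_above_zero[OF tr PG \<open>i < d\<close> \<open>k < d\<close>, of t0])
        (use t0 t1 t2 True assms(3,6) in auto)
  next
    case False
    show ?thesis
      by (rule totally_rankable_unique_top[OF tr PG \<open>k < d\<close>])
        (use t1 t2 False assms(3) in auto)
  qed
  with t12 show False by simp
qed

theorem mainTheorem19:
  fixes d :: nat and P :: "nat list set"
  assumes "d \<ge> 1" and "permutation_array 2 d P"
  shows "\<forall>S. S \<subseteq> P \<and> card S = 4 \<longrightarrow>
           (\<exists>S'. S' \<subseteq> S \<and> card S' \<ge> 2 \<and>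
              (\<forall>i<d. \<exists>a\<in>S'. \<exists>b\<in>S'. a \<noteq> b \<and>
                   a ! i = Min (coord_vals i S') \<and> b ! i = Min (coord_vals i S')))"
proof (intro allI impI)
  fix S assume S: "S \<subseteq> P \<and> card S = 4"
  have PG: "P \<subseteq> grid 2 d" and tr: "totally_rankable 2 d P"
    using assms(2) by (auto simp: permutation_array_def)
  have "\<exists>S'. S' \<subseteq> S \<and> card S' \<ge> 2 \<and> (\<forall>i<d. min_attained_twice i S')"
  proof (cases "\<forall>i<d. min_attained_twice i S")
    case True
    then show ?thesis using S by auto
  next
    case False
    then obtain i where "i < d" and not_twice: "\<not> min_attained_twice i S" by blast
    have "finite S" "S \<noteq> {}" using S card.infinite by fastforce+
    then obtain s where s: "s \<in> S" and gt: "\<And>t. t \<in> S \<Longrightarrow> t \<noteq> s \<Longrightarrow> s ! i < t ! i"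
      using unique_minimiser_if_not_min_attained_twice[OF _ _ not_twice] by blast
    have "card (S - {s}) = 3" using S s \<open>finite S\<close> by simp
    moreover have "\<forall>t\<in>S - {s}. 1 \<le> t ! i" using gt by fastforce
    ultimately have "\<forall>k<d. min_attained_twice k (S - {s})"
      using three_above_threshold_min_attained_twice[OF tr PG _ _ \<open>i < d\<close>] S by blast
    then show ?thesis using \<open>card (S - {s}) = 3\<close> by (intro exI[of _ "S - {s}"]) auto
  qed
  then show "\<exists>S'. S' \<subseteq> S \<and> card S' \<ge> 2 \<and>
              (\<forall>i<d. \<exists>a\<in>S'. \<exists>b\<in>S'. a \<noteq> b \<and>
                   a ! i = Min (coord_vals i S') \<and> b ! i = Min (coord_vals i S'))"
    unfolding min_attained_twice_def .
qed

end
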